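(* Consider the delay differential system \[ \begin{aligned} \dot T(t)&= s-dT(t)+aT(t)\Big(1-\frac{T(t)+I(t)}{T_{\max}}\Big)-\frac{bT(t)V(t)}{1+\alpha V(t)},\\ \dot I(t)&= \frac{bT(t-\tau)V(t-\tau)}{1+\alpha V(t-\tau)}+aI(t)\Big(1-\frac{T(t)+I(t)}{T_{\max}}\Big)-\mu I(t),\\ \dot V(t)&= pI(t)-cV(t), \end{aligned} \] with positive constants $s,d,a,T_{\max},b,\alpha,\mu,p,c$ and $\tau\ge0$. Let \[ T_0=\frac{T_{\max}}{2a}\Big(a-d+\sqrt{(a-d)^2+\tfrac{4as}{T_{\max}}}\Big),\qquad R_0=\frac{1}{\mu}\Big[\frac{bpT_0}{c}+a\Big(1-\frac{T_0}{T_{\max}}\Big)\Big]. \] Assume $d=\mu$ and $R_0>1$. Then the infected equilibrium $E_2=(T_2,I_2,V_2)$ (the unique equilibrium with all components positive) is globally asymptotically stable (with respect to solutions with positive initial data) for any $\tau\ge0$. *)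

theory Defs
  imports "HOL-Analysis.Analysis"
begin

definition incid :: "real \<Rightarrow> real \<Rightarrow> real \<Rightarrow> real \<Rightarrow> real" where
  "incid b al x v = b * x * v / (1 + al * v)"

definition T0 :: "real \<Rightarrow> real \<Rightarrow> real \<Rightarrow> real \<Rightarrow> real" where
  "T0 s d a Tm = Tm / (2 * a) * (a - d + sqrt ((a - d)^2 + 4 * a * s / Tm))"

definition R0 :: "real \<Rightarrow> real \<Rightarrow> real \<Rightarrow> real \<Rightarrow> real \<Rightarrow> real \<Rightarrow> real \<Rightarrow> real \<Rightarrow> real" where
  "R0 s d a Tm b mu p c =
     (1 / mu) * (b * p * T0 s d a Tm / c + a * (1 - T0 s d a Tm / Tm))"

definition is_solution ::
  "real \<Rightarrow> real \<Rightarrow> real \<Rightarrow> real \<Rightarrow> real \<Rightarrow> real \<Rightarrow> real \<Rightarrow> real \<Rightarrow> real \<Rightarrow> real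
   \<Rightarrow> (real \<Rightarrow> real) \<Rightarrow> (real \<Rightarrow> real) \<Rightarrow> (real \<Rightarrow> real) \<Rightarrow> bool" where
  "is_solution s d a Tm b al mu p c tau T I V \<longleftrightarrow>
     continuous_on {-tau..} T \<and> continuous_on {-tau..} I \<and> continuous_on {-tau..} V \<and>
     (\<forall>t\<ge>0.
        (T has_real_derivative
           (s - d * T t + a * T t * (1 - (T t + I t) / Tm) - incid b al (T t) (V t)))
          (at t within {0..}) \<and>
        (I has_real_derivative
           (incid b al (T (t - tau)) (V (t - tau)) + a * I t * (1 - (T t + I t) / Tm) - mu * I t))
          (at t within {0..}) \<and>
        (V has_real_derivative (p * I t - c * V t)) (at t within {0..}))"

definition pos_init :: "real \<Rightarrow> (real \<Rightarrow> real) \<Rightarrow> (real \<Rightarrow> real) \<Rightarrow> (real \<Rightarrow> real) \<Rightarrow> bool" where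
  "pos_init tau T I V \<longleftrightarrow> (\<forall>\<theta>\<in>{-tau..0}. T \<theta> > 0 \<and> I \<theta> > 0 \<and> V \<theta> > 0)"

definition pos_equilibrium ::
  "real \<Rightarrow> real \<Rightarrow> real \<Rightarrow> real \<Rightarrow> real \<Rightarrow> real \<Rightarrow> real \<Rightarrow> real \<Rightarrow> real
   \<Rightarrow> real \<times> real \<times> real \<Rightarrow> bool" where
  "pos_equilibrium s d a Tm b al mu p c E \<longleftrightarrow>
     (case E of (T2, I2, V2) \<Rightarrow>
        T2 > 0 \<and> I2 > 0 \<and> V2 > 0 \<and>
        s - d * T2 + a * T2 * (1 - (T2 + I2) / Tm) - incid b al T2 V2 = 0 \<and>
        incid b al T2 V2 + a * I2 * (1 - (T2 + I2) / Tm) - mu * I2 = 0 \<and>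
        p * I2 - c * V2 = 0)"

definition globally_asymp_stable ::
  "real \<Rightarrow> real \<Rightarrow> real \<Rightarrow> real \<Rightarrow> real \<Rightarrow> real \<Rightarrow> real \<Rightarrow> real \<Rightarrow> real \<Rightarrow> real
   \<Rightarrow> real \<times> real \<times> real \<Rightarrow> bool" where
  "globally_asymp_stable s d a Tm b al mu p c tau E \<longleftrightarrow>
     (case E of (T2, I2, V2) \<Rightarrow>
       (\<forall>\<epsilon>>0. \<exists>\<delta>>0. \<forall>T I V.
          is_solution s d a Tm b al mu p c tau T I V \<and> pos_init tau T I V \<and>
          (\<forall>\<theta>\<in>{-tau..0}. \<bar>T \<theta> - T2\<bar> < \<delta> \<and> \<bar>I \<theta> - I2\<bar> < \<delta> \<and> \<bar>V \<theta> - V2\<bar> < \<delta>)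
          \<longrightarrow> (\<forall>t\<ge>0. \<bar>T t - T2\<bar> < \<epsilon> \<and> \<bar>I t - I2\<bar> < \<epsilon> \<and> \<bar>V t - V2\<bar> < \<epsilon>)) \<and>
       (\<forall>T I V.
          is_solution s d a Tm b al mu p c tau T I V \<and> pos_init tau T I V
          \<longrightarrow> (T \<longlongrightarrow> T2) at_top \<and> (I \<longlongrightarrow> I2) at_top \<and> (V \<longlongrightarrow> V2) at_top))"

end

theory Submission
  imports Defs
begin

text \<open>
  Let g(y) = y - 1 - ln y and let f* be the incidence at the infected equilibrium (T*, I*, V*).
  Along a positive solution the functional
    L = T* g(T/T*) + I* g(I/I*) + f*/(p I*) V* g(V/V*) + f* (integral over [t - tau, t] of g(f/f*))
  satisfies, when d = mu, L' <= -W with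
    W = s/N* (T - T*)^2/T + a (N - N*)^2/Tm + f* al (V - V*)^2 / (V* (1 + al V*) (1 + al V)),
  where N = T + I.
  After the equilibrium equations are used, what remains of L' + W is f* times
  4 - A - B - R - Q + ln (A B R Q) for four positive ratios, and ln x <= x - 1 makes it nonpositive.
  So L is nonincreasing. Near E2 it is comparable to the squared distance from E2, which gives
  stability; in general it bounds the solution, hence also its derivatives, and then each term of W
  must tend to 0 since otherwise L would decrease without bound.

  With d = mu the total population N* of an equilibrium solves the logistic equation
  s - d N + a N (1 - N/Tm) = 0, whose only positive root is T0; then I* solves a linear equation,
  and R0 > 1 is exactly the condition that I* > 0.
\<close>

section \<open>The Volterra function\<close>

definition volterra :: "real \<Rightarrow> real" where
  "volterra y = y - 1 - ln y"

lemma volterra_nonneg: "y > 0 \<Longrightarrow> volterra y \<ge> 0"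
  unfolding volterra_def using ln_le_minus_one[of y] by simp

lemma sqrt_diff_one_sq_le_volterra:
  assumes "y > 0"
  shows "(sqrt y - 1)^2 \<le> volterra y"
proof -
  have "ln y = 2 * ln (sqrt y)" using assms by (simp add: ln_sqrt)
  also have "\<dots> \<le> 2 * (sqrt y - 1)" using ln_le_minus_one[of "sqrt y"] assms by simp
  finally have "ln y \<le> 2 * (sqrt y - 1)" .
  moreover have "(sqrt y - 1)^2 = y - 2 * sqrt y + 1" using assms by (simp add: power2_diff)
  ultimately show ?thesis unfolding volterra_def by simp
qed

lemma volterra_le:
  assumes "y > 0"
  shows "volterra y \<le> (y - 1)^2 / y"
proof -
  have "- ln y \<le> 1/y - 1" using ln_le_minus_one[of "1/y"] assms by (simp add: ln_div)
  then have "volterra y \<le> y - 2 + 1/y" unfolding volterra_def by simp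
  also have "y - 2 + 1/y = (y - 1)^2 / y" using assms by (simp add: field_simps power2_eq_square)
  finally show ?thesis .
qed

lemma volterra_le_imp_le:
  assumes "y > 0" "k > 0" "k * volterra y \<le> C"
  shows "y \<le> (1 + sqrt (C/k))^2"
proof -
  have "volterra y \<le> C/k" using assms(2,3) by (simp add: pos_le_divide_eq mult.commute)
  then have "(sqrt y - 1)^2 \<le> C/k" using sqrt_diff_one_sq_le_volterra[OF assms(1)] by linarith
  then have "\<bar>sqrt y - 1\<bar> \<le> sqrt (C/k)" using real_sqrt_le_mono by fastforce
  then have "sqrt y \<le> 1 + sqrt (C/k)" by linarith
  then have "(sqrt y)^2 \<le> (1 + sqrt (C/k))^2" by (rule power_mono) (use assms(1) in simp)
  then show ?thesis using assms(1) by simp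
qed

definition volterra_radius :: "real \<Rightarrow> real \<Rightarrow> real" where
  "volterra_radius e x = (min 1 (e / (3 * x)))^2"

lemma volterra_radius_pos: "e > 0 \<Longrightarrow> x > 0 \<Longrightarrow> volterra_radius e x > 0"
  unfolding volterra_radius_def by (simp add: min_def)

lemma volterra_lt_radius_imp_close:
  assumes "x > 0" "xs > 0" "e > 0" "volterra (x / xs) < volterra_radius e xs"
  shows "\<bar>x - xs\<bar> < e"
proof -
  define r where "r = min 1 (e / (3 * xs))"
  define y where "y = x / xs"
  have r: "r > 0" "r \<le> 1" "3 * r * xs \<le> e"
    using assms unfolding r_def by (auto simp: min_def field_simps)
  have y: "y > 0" using assms unfolding y_def by simp
  have "(sqrt y - 1)^2 < r^2"
    using sqrt_diff_one_sq_le_volterra[OF y] assms unfolding volterra_radius_def r_def y_def by simp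
  then have "sqrt ((sqrt y - 1)^2) < sqrt (r^2)" by (rule real_sqrt_less_mono)
  then have root: "\<bar>sqrt y - 1\<bar> < r" using r by simp
  have "y - 1 = (sqrt y - 1) * (sqrt y + 1)" using y by (simp add: algebra_simps)
  then have "\<bar>y - 1\<bar> = \<bar>sqrt y - 1\<bar> * (sqrt y + 1)"
    using y by (simp add: abs_mult add_nonneg_pos)
  also have "\<dots> < r * (2 + r)" using root y r by (intro mult_strict_mono) auto
  also have "\<dots> \<le> 3 * r" using r by simp
  finally have "xs * \<bar>y - 1\<bar> < xs * (3 * r)" using assms(2) by simp
  moreover have "xs * \<bar>y - 1\<bar> = \<bar>x - xs\<bar>"
    using assms(2) unfolding y_def by (simp add: abs_mult [symmetric] field_simps)
  ultimately show ?thesis using r by (simp add: mult.commute mult.left_commute)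
qed

lemma volterra_near_one:
  assumes "x > 0" "xs > 0" "\<bar>x - xs\<bar> \<le> \<delta>" "\<delta> \<le> xs / 2"
  shows "xs * volterra (x / xs) \<le> 2 * \<delta>^2 / xs"
proof -
  have "xs * volterra (x / xs) \<le> xs * ((x/xs - 1)^2 / (x/xs))"
    using volterra_le[of "x/xs"] assms by (intro mult_left_mono) auto
  also have "\<dots> = (x - xs)^2 / x" using assms(1,2) by (simp add: field_simps power2_eq_square)
  also have "\<dots> \<le> \<delta>^2 / x"
    using assms(1,3) power_mono[of "\<bar>x - xs\<bar>" \<delta> 2] by (intro divide_right_mono) auto
  also have "\<dots> \<le> \<delta>^2 / (xs / 2)" using assms by (intro divide_left_mono) auto
  also have "\<dots> = 2 * \<delta>^2 / xs" by simp
  finally show ?thesis .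
qed

lemma volterra_deriv:
  assumes "(X has_real_derivative X') (at t within S)" "X t > 0" "k > 0"
  shows "((\<lambda>t. k * volterra (X t / k)) has_real_derivative (1 - k / X t) * X') (at t within S)"
proof -
  have "((\<lambda>t. k * (X t / k - 1 - ln (X t / k))) has_real_derivative
          k * (X' / k - 0 - (X' / k) / (X t / k))) (at t within S)"
    using assms by (auto intro!: derivative_eq_intros)
  moreover have "k * (X' / k - 0 - (X' / k) / (X t / k)) = (1 - k / X t) * X'"
    using assms by (simp add: field_simps)
  ultimately show ?thesis unfolding volterra_def by simp
qed

section \<open>Calculus on the half-line\<close>

lemma at_within_atLeast: "a < t \<Longrightarrow> at t within {a::real..} = at t"
  by (rule at_within_interior) (simp add: interior_real_atLeast)

lemma DERIV_ge_neg_multiple_imp_pos: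
  fixes X X' :: "real \<Rightarrow> real"
  assumes "a \<le> b" "continuous_on {a..b} X" "X a > 0"
    and "\<And>t. a < t \<Longrightarrow> t < b \<Longrightarrow> (X has_real_derivative X' t) (at t)"
    and "\<And>t. a < t \<Longrightarrow> t < b \<Longrightarrow> X' t \<ge> - K * X t"
  shows "X b > 0"
proof -
  define Y where "Y t = X t * exp (K * t)" for t
  have "Y a \<le> Y b"
  proof (rule DERIV_nonneg_imp_increasing_open[OF assms(1)])
    fix t assume t: "a < t" "t < b"
    have "(Y has_real_derivative (X' t + K * X t) * exp (K * t)) (at t)"
      unfolding Y_def using assms(4)[OF t]
      by (auto intro!: derivative_eq_intros simp: algebra_simps)
    moreover have "(X' t + K * X t) * exp (K * t) \<ge> 0" using assms(5)[OF t] by simp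
    ultimately show "\<exists>y. (Y has_real_derivative y) (at t) \<and> 0 \<le> y" by blast
  next
    show "continuous_on {a..b} Y" unfolding Y_def using assms(2) by (intro continuous_intros) auto
  qed
  then have "X b * exp (K * b) > 0" using assms(3) unfolding Y_def
    by (smt (verit) exp_gt_zero mult_pos_pos)
  then show ?thesis by (simp add: zero_less_mult_iff)
qed

lemma DERIV_bounded_imp_lipschitz:
  fixes F F' :: "real \<Rightarrow> real"
  assumes der: "\<And>t. t \<ge> t0 \<Longrightarrow> (F has_real_derivative F' t) (at t within {t0..})"
    and bnd: "\<And>t. t \<ge> t0 \<Longrightarrow> \<bar>F' t\<bar> \<le> M"
    and "t0 \<le> x" "x \<le> y"
  shows "\<bar>F y - F x\<bar> \<le> M * (y - x)"
proof (cases "x = y")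
  case False
  then have xy: "x < y" using assms(4) by simp
  have at: "(F has_real_derivative F' u) (at u)" if "u > t0" for u
    using der[of u] that at_within_atLeast[of t0 u] by simp
  have "continuous_on {x..y} F"
    by (rule DERIV_continuous_on[of _ _ F'], rule DERIV_subset[OF der]) (use assms(3) in auto)
  moreover have "F differentiable (at u)" if "x < u" for u
    using at[of u] that assms(3) real_differentiable_def by auto
  ultimately obtain l z where z: "x < z" "z < y" "DERIV F z :> l" "F y - F x = (y - x) * l"
    using MVT[OF xy] by blast
  have "l = F' z" using DERIV_unique[OF z(3) at] z(1) assms(3) by simp
  then have "\<bar>F y - F x\<bar> = (y - x) * \<bar>F' z\<bar>" using z(4) xy by (simp add: abs_mult)
  also have "\<dots> \<le> (y - x) * M" using bnd[of z] z(1) xy assms(3) by (intro mult_left_mono) auto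
  finally show ?thesis by (simp add: mult.commute)
qed simp

lemma DERIV_le_neg_imp_decrease:
  fixes L L' :: "real \<Rightarrow> real"
  assumes "x \<le> y" "continuous_on {x..y} L"
    and "\<And>u. x < u \<Longrightarrow> u < y \<Longrightarrow> (L has_real_derivative L' u) (at u)"
    and "\<And>u. x < u \<Longrightarrow> u < y \<Longrightarrow> L' u \<le> - K"
  shows "L y \<le> L x - K * (y - x)"
proof -
  have "L y + K * y \<le> L x + K * x"
  proof (rule DERIV_nonpos_imp_decreasing_open[OF assms(1)])
    fix u assume u: "x < u" "u < y"
    have "((\<lambda>t. L t + K * t) has_real_derivative L' u + K) (at u)"
      by (auto intro!: derivative_eq_intros assms(3) u)
    then show "\<exists>z. ((\<lambda>t. L t + K * t) has_real_derivative z) (at u) \<and> z \<le> 0"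
      using assms(4)[OF u] by force
  next
    show "continuous_on {x..y} (\<lambda>t. L t + K * t)" by (intro continuous_intros assms(2))
  qed
  then show ?thesis by (simp add: algebra_simps)
qed

lemma lyapunov_dissipation_imp_tendsto:
  fixes L L' F :: "real \<Rightarrow> real"
  assumes der: "\<And>t. t > 0 \<Longrightarrow> (L has_real_derivative L' t) (at t)"
    and cont: "continuous_on {0..} L"
    and dissip: "\<And>t. t > 0 \<Longrightarrow> L' t \<le> - \<kappa> * (F t - c)^2"
    and "\<kappa> > 0"
    and nonneg: "\<And>t. t \<ge> 0 \<Longrightarrow> L t \<ge> 0"
    and lip: "\<And>x y. t0 \<le> x \<Longrightarrow> x \<le> y \<Longrightarrow> \<bar>F y - F x\<bar> \<le> M * (y - x)"
    and "M > 0"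
  shows "(F \<longlongrightarrow> c) at_top"
proof -
  have decrease: "L y \<le> L x - K * (y - x)"
    if "0 \<le> x" "x \<le> y" and K: "\<And>u. x < u \<Longrightarrow> u < y \<Longrightarrow> \<kappa> * (F u - c)^2 \<ge> K" for x y K
  proof (rule DERIV_le_neg_imp_decrease[OF \<open>x \<le> y\<close> _ der])
    show "continuous_on {x..y} L" using continuous_on_subset[OF cont] \<open>0 \<le> x\<close> by auto
    show "L' u \<le> - K" if "x < u" "u < y" for u
      using dissip[of u] K[OF that] that \<open>0 \<le> x\<close> by simp
  qed (use \<open>0 \<le> x\<close> in auto)
  have mono: "L y \<le> L x" if "0 \<le> x" "x \<le> y" for x y
    using decrease[of x y 0] that \<open>\<kappa> > 0\<close> by simp
  define l where "l = Inf (L ` {0..})"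
  have bdd: "bdd_below (L ` {0..})" using nonneg by (intro bdd_belowI[of _ 0]) auto
  show ?thesis unfolding tendsto_iff dist_real_def
  proof (intro allI impI, rule ccontr)
    fix e :: real assume "e > 0" and "\<not> eventually (\<lambda>t. \<bar>F t - c\<bar> < e) at_top"
    then have far: "\<exists>t\<ge>N. \<bar>F t - c\<bar> \<ge> e" for N
      unfolding eventually_at_top_linorder by (meson not_le)
    \<comment> \<open>Each time \<open>F\<close> is \<open>e\<close>-far from \<open>c\<close>, it stays \<open>e/2\<close>-far for time \<open>h\<close>, so \<open>L\<close> drops by \<open>D\<close>.\<close>
    define h where "h = e / (2 * M)"
    define D where "D = \<kappa> * (e/2)^2 * h"
    have h: "h > 0" "M * h = e / 2" using \<open>e > 0\<close> \<open>M > 0\<close> unfolding h_def by auto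
    have "D > 0" using \<open>\<kappa> > 0\<close> \<open>e > 0\<close> h unfolding D_def by simp
    then obtain x0 where x0: "x0 \<ge> 0" "L x0 < l + D"
      using cInf_less_iff[OF _ bdd, of "l + D"] unfolding l_def by auto
    obtain t where t: "t \<ge> max x0 t0" "\<bar>F t - c\<bar> \<ge> e" using far by blast
    have "L (t + h) \<le> L t - \<kappa> * (e/2)^2 * ((t + h) - t)"
    proof (rule decrease)
      fix u assume u: "t < u" "u < t + h"
      have "\<bar>F u - F t\<bar> \<le> M * h"
        using lip[of t u] t u \<open>M > 0\<close> by (smt (verit) max.bounded_iff mult_left_mono)
      then have "e / 2 \<le> \<bar>F u - c\<bar>" using t h by linarith
      then have "(e/2)^2 \<le> (F u - c)^2"
        using power_mono[of "e/2" "\<bar>F u - c\<bar>" 2] \<open>e > 0\<close> by simp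
      then show "\<kappa> * (e/2)^2 \<le> \<kappa> * (F u - c)^2"
        using \<open>\<kappa> > 0\<close> by simp
    qed (use t x0 h in auto)
    then have "L (t + h) \<le> L t - D" unfolding D_def by simp
    moreover have "L t \<le> L x0" using mono[of x0 t] x0 t by auto
    moreover have "l \<le> L (t + h)" unfolding l_def using t x0 h by (intro cInf_lower[OF _ bdd]) auto
    ultimately show False using x0 by linarith
  qed
qed

section \<open>The saturated incidence\<close>

lemma incid_pos: "b > 0 \<Longrightarrow> al \<ge> 0 \<Longrightarrow> x > 0 \<Longrightarrow> v > 0 \<Longrightarrow> incid b al x v > 0"
  unfolding incid_def by (simp add: add_pos_nonneg)

lemma incid_le_mass_action:
  assumes "b \<ge> 0" "al \<ge> 0" "x \<ge> 0" "v \<ge> 0"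
  shows "incid b al x v \<le> b * x * v"
  unfolding incid_def using assms divide_left_mono[of 1 "1 + al * v" "b * x * v"]
  by (simp add: add_pos_nonneg)

lemma incid_le_square_bound:
  assumes "b \<ge> 0" "al \<ge> 0" "0 \<le> x" "x \<le> B" "0 \<le> v" "v \<le> B"
  shows "incid b al x v \<le> b * B^2"
proof -
  have "incid b al x v \<le> b * x * v" using assms by (intro incid_le_mass_action) auto
  also have "\<dots> = b * (x * v)" by simp
  also have "\<dots> \<le> b * (B * B)" using assms by (intro mult_left_mono mult_mono) auto
  finally show ?thesis by (simp add: power2_eq_square)
qed

lemma incid_lipschitz:
  assumes "b > 0" "al > 0" "x > 0" "v > 0" "xs > 0" "vs > 0" "\<bar>x - xs\<bar> \<le> \<delta>" "\<bar>v - vs\<bar> \<le> \<delta>"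
  shows "\<bar>incid b al x v - incid b al xs vs\<bar> \<le> b * (1/al + xs) * \<delta>"
proof -
  define q where "q = v / (1 + al * v)"
  define qs where "qs = vs / (1 + al * vs)"
  have pos: "1 \<le> 1 + al * v" "1 \<le> 1 + al * vs" using assms by simp_all
  have q: "0 \<le> q" "q \<le> 1/al"
    using assms add_pos_pos[of 1 "al * v"] unfolding q_def by (simp_all add: field_simps)
  have "q - qs = (v - vs) / ((1 + al * v) * (1 + al * vs))"
    using pos unfolding q_def qs_def by (simp add: field_simps)
  then have "\<bar>q - qs\<bar> = \<bar>v - vs\<bar> / ((1 + al * v) * (1 + al * vs))"
    using pos by simp
  also have "\<dots> \<le> \<bar>v - vs\<bar>"
    using pos mult_mono[OF pos] by (simp add: divide_le_eq mult_le_cancel_left1)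
  finally have qq: "\<bar>q - qs\<bar> \<le> \<delta>" using assms by linarith
  have "incid b al x v - incid b al xs vs = b * ((x - xs) * q + xs * (q - qs))"
    unfolding incid_def q_def qs_def by (simp add: algebra_simps diff_divide_distrib)
  then have "\<bar>incid b al x v - incid b al xs vs\<bar> \<le> b * (\<bar>x - xs\<bar> * q + xs * \<bar>q - qs\<bar>)"
    using assms q by (simp add: abs_mult abs_triangle_ineq order_trans[OF abs_triangle_ineq])
  also have "\<dots> \<le> b * (\<delta> * (1/al) + xs * \<delta>)"
    using assms q qq by (intro mult_left_mono add_mono mult_mono) auto
  finally show ?thesis by (simp add: algebra_simps)
qed

lemma saturation_identity:
  fixes v vs al u w :: real
  assumes "u = 1 + al * v" "w = 1 + al * vs" "v \<noteq> 0" "vs \<noteq> 0" "u \<noteq> 0" "w \<noteq> 0"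
  shows "(v / vs) * (w / u) - v / vs + u / w - 1 = - al * (v - vs)^2 / (vs * w * u)"
proof -
  have "(v / vs) * (w / u) - v / vs + u / w - 1 = (v * w * w - v * u * w + u * u * vs - vs * w * u) / (vs * w * u)"
    using assms(3-6) by (simp add: field_simps)
  also have "v * w * w - v * u * w + u * u * vs - vs * w * u = - al * (v - vs)^2"
    unfolding assms(1,2) by (simp add: algebra_simps power2_eq_square)
  finally show ?thesis by simp
qed

section \<open>Equilibria\<close>

lemma logistic_equilibrium_unique:
  fixes s d a Tm N N' :: real
  assumes "s > 0" "a > 0" "Tm > 0" "N > 0" "N' > 0"
    and "s - d * N + a * N * (1 - N / Tm) = 0" and "s - d * N' + a * N' * (1 - N' / Tm) = 0"
  shows "N = N'"
proof (rule ccontr)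
  assume "N \<noteq> N'"
  moreover have "(N - N') * (a - d - a * (N + N') / Tm) = 0"
    using assms(3,6,7) by (simp add: field_simps)
  ultimately have "a - d = a * (N + N') / Tm" by simp
  then have "d - a + a * N / Tm = - (a * N' / Tm)" by (simp add: add_divide_distrib distrib_left)
  moreover have "s = N * (d - a + a * N / Tm)" using assms(3,6) by (simp add: field_simps)
  ultimately have "s = - (N * (a * N' / Tm))" by simp
  moreover have "N * (a * N' / Tm) > 0" using assms by simp
  ultimately show False using assms(1) by linarith
qed

lemma T0_logistic_root:
  assumes "s > 0" "a > 0" "Tm > 0"
  shows "T0 s d a Tm > 0" and "s - d * T0 s d a Tm + a * T0 s d a Tm * (1 - T0 s d a Tm / Tm) = 0"
proof -
  define S where "S = sqrt ((a - d)^2 + 4 * a * s / Tm)"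
  define N where "N = T0 s d a Tm"
  have N: "N = Tm / (2 * a) * (a - d + S)" unfolding N_def T0_def S_def by simp
  have disc: "(a - d)^2 < (a - d)^2 + 4 * a * s / Tm" using assms by simp
  then have "sqrt ((a - d)^2) < S" unfolding S_def by (rule real_sqrt_less_mono)
  then have "\<bar>a - d\<bar> < S" by simp
  then show "T0 s d a Tm > 0" unfolding N_def[symmetric] N using assms by simp
  have S2: "S^2 = (a - d)^2 + 4 * a * s / Tm"
    unfolding S_def by (rule real_sqrt_pow2) (use disc in \<open>auto intro: order_trans[OF zero_le_power2]\<close>)
  have "a * N^2 / Tm - (a - d) * N = Tm / (4 * a) * (S^2 - (a - d)^2)"
    unfolding N using assms by (simp add: field_simps power2_eq_square)
  also have "\<dots> = s" unfolding S2 using assms by (simp add: field_simps)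
  finally have "a * N^2 / Tm - (a - d) * N = s" .
  then show "s - d * T0 s d a Tm + a * T0 s d a Tm * (1 - T0 s d a Tm / Tm) = 0"
    unfolding N_def[symmetric] using assms by (simp add: field_simps power2_eq_square)
qed

locale tiv_model =
  fixes s d a Tm b al mu p c tau :: real
  assumes params: "s > 0" "d > 0" "a > 0" "Tm > 0" "b > 0" "al > 0" "mu > 0" "p > 0" "c > 0"
    and tau_nonneg: "tau \<ge> 0"
    and d_eq_mu: "d = mu"
begin

lemma pos_equilibrium_reduced:
  assumes "pos_equilibrium s d a Tm b al mu p c (T2, I2, V2)"
  shows "s - d * (T2 + I2) + a * (T2 + I2) * (1 - (T2 + I2) / Tm) = 0"
    and "b * T2 * p = (d - a * (1 - (T2 + I2) / Tm)) * (c + al * p * I2)"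
    and "V2 = p * I2 / c"
proof -
  have pos: "T2 > 0" "I2 > 0" "V2 > 0"
    and eqT: "s - d * T2 + a * T2 * (1 - (T2 + I2) / Tm) - incid b al T2 V2 = 0"
    and eqI: "incid b al T2 V2 + a * I2 * (1 - (T2 + I2) / Tm) - mu * I2 = 0"
    and eqV: "p * I2 - c * V2 = 0"
    using assms unfolding pos_equilibrium_def by auto
  show "s - d * (T2 + I2) + a * (T2 + I2) * (1 - (T2 + I2) / Tm) = 0"
    using eqT eqI d_eq_mu by (simp add: algebra_simps)
  show V2: "V2 = p * I2 / c" using eqV params by (simp add: field_simps)
  define k where "k = d - a * (1 - (T2 + I2) / Tm)"
  have "c + al * p * I2 > 0" using params pos by (simp add: add_pos_pos)
  moreover have "incid b al T2 V2 = b * T2 * p * I2 / (c + al * p * I2)"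
    unfolding incid_def V2 using params by (simp add: field_simps)
  moreover have "incid b al T2 V2 = k * I2" using eqI d_eq_mu unfolding k_def by (simp add: algebra_simps)
  ultimately have "b * T2 * p * I2 = k * I2 * (c + al * p * I2)" by (simp add: divide_eq_eq)
  then have "I2 * (b * T2 * p) = I2 * (k * (c + al * p * I2))" by (simp add: algebra_simps)
  then show "b * T2 * p = (d - a * (1 - (T2 + I2) / Tm)) * (c + al * p * I2)"
    unfolding k_def using pos by simp
qed

lemma pos_equilibrium_unique:
  assumes "pos_equilibrium s d a Tm b al mu p c (T1, I1, V1)"
    and "pos_equilibrium s d a Tm b al mu p c (T2, I2, V2)"
  shows "(T1, I1, V1) = (T2, I2, V2)"
proof -
  note E1 = pos_equilibrium_reduced[OF assms(1)] and E2 = pos_equilibrium_reduced[OF assms(2)]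
  have pos: "T1 > 0" "I1 > 0" "T2 > 0" "I2 > 0" using assms unfolding pos_equilibrium_def by auto
  have N: "T1 + I1 = T2 + I2"
    by (rule logistic_equilibrium_unique[of s a Tm _ _ d]) (use E1(1) E2(1) params pos in auto)
  define k where "k = d - a * (1 - (T1 + I1) / Tm)"
  have "k * (T1 + I1) = s" using E1(1) unfolding k_def by argo
  then have "k > 0" using params pos zero_less_mult_pos2[of k "T1 + I1"] by simp
  have "b * (T1 + I1 - I1) * p = k * (c + al * p * I1)" using E1(2) unfolding k_def by simp
  moreover have "b * (T1 + I1 - I2) * p = k * (c + al * p * I2)" using E2(2) N unfolding k_def by simp
  ultimately have "(I1 - I2) * (b * p + k * al * p) = 0" by (simp add: algebra_simps)
  moreover have "b * p + k * al * p > 0" using params \<open>k > 0\<close> by (simp add: add_pos_pos)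
  ultimately have "I1 = I2" by simp
  then show ?thesis using N E1(3) E2(3) by simp
qed

lemma pos_equilibrium_exists:
  assumes "R0 s d a Tm b mu p c > 1"
  shows "\<exists>E. pos_equilibrium s d a Tm b al mu p c E"
proof -
  define N where "N = T0 s d a Tm"
  have N: "N > 0" "s - d * N + a * N * (1 - N / Tm) = 0"
    using T0_logistic_root[of s a Tm d] params unfolding N_def by auto
  define k where "k = d - a * (1 - N / Tm)"
  have "k = s / N" using N unfolding k_def by (simp add: field_simps)
  then have "k > 0" using N params by simp
  have "b * p * N / c + a * (1 - N / Tm) > mu"
    using assms params unfolding R0_def N_def[symmetric] by (simp add: field_simps)
  then have "b * p * N > k * c" using params d_eq_mu unfolding k_def by (simp add: field_simps)
  \<comment> \<open>At an equilibrium with \<open>T2 + I2 = N\<close> the incidence equals \<open>k I2\<close>; with \<open>V2 = p I2 / c\<close>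
    this becomes \<open>b (N - I2) p = k (c + al p I2)\<close>, which is linear in \<open>I2\<close>.\<close>
  define D where "D = b * p + k * al * p"
  have "D > 0" unfolding D_def using params \<open>k > 0\<close> by (simp add: add_pos_pos)
  define I2 where "I2 = (b * p * N - k * c) / D"
  define T2 where "T2 = N - I2"
  define V2 where "V2 = p * I2 / c"
  have I2: "I2 > 0" unfolding I2_def using \<open>b * p * N > k * c\<close> \<open>D > 0\<close> by simp
  have T2: "T2 = k * (al * p * N + c) / D"
    unfolding T2_def I2_def using \<open>D > 0\<close> by (simp add: field_simps D_def)
  have "b * T2 * p = k * (c + al * p * I2)"
    unfolding T2 I2_def using \<open>D > 0\<close> by (simp add: field_simps D_def)
  moreover have "c + al * p * I2 > 0" using params I2 by (simp add: add_pos_pos)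
  moreover have "incid b al T2 V2 = b * T2 * p * I2 / (c + al * p * I2)"
    unfolding incid_def V2_def using params by (simp add: field_simps)
  ultimately have incid: "incid b al T2 V2 = k * I2" by simp
  have "pos_equilibrium s d a Tm b al mu p c (T2, I2, V2)"
    unfolding pos_equilibrium_def prod.case
  proof (intro conjI)
    show "T2 > 0" unfolding T2 using \<open>k > 0\<close> \<open>D > 0\<close> N params by (simp add: add_pos_pos)
    show "I2 > 0" "V2 > 0" using I2 params unfolding V2_def by simp_all
    have NT: "T2 + I2 = N" unfolding T2_def by simp
    have "s - d * T2 + a * T2 * (1 - (T2 + I2) / Tm) - incid b al T2 V2 = s - k * (T2 + I2)"
      unfolding incid k_def NT[symmetric] using params by (simp add: field_simps)
    then show "s - d * T2 + a * T2 * (1 - (T2 + I2) / Tm) - incid b al T2 V2 = 0"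
      unfolding NT \<open>k = s / N\<close> using N by simp
    show "incid b al T2 V2 + a * I2 * (1 - (T2 + I2) / Tm) - mu * I2 = 0"
      unfolding incid NT k_def using d_eq_mu by (simp add: algebra_simps)
    show "p * I2 - c * V2 = 0" unfolding V2_def using params by simp
  qed
  then show ?thesis by blast
qed

end

section \<open>Positivity of solutions\<close>

locale tiv_solution = tiv_model +
  fixes T I V :: "real \<Rightarrow> real"
  assumes solution: "is_solution s d a Tm b al mu p c tau T I V"
    and pos_history: "pos_init tau T I V"
begin

definition "fT t = s - d * T t + a * T t * (1 - (T t + I t) / Tm) - incid b al (T t) (V t)"
definition "fI t = incid b al (T (t - tau)) (V (t - tau)) + a * I t * (1 - (T t + I t) / Tm) - mu * I t"
definition "fV t = p * I t - c * V t"

lemma continuous_on_T: "continuous_on {-tau..} T"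
  and continuous_on_I: "continuous_on {-tau..} I"
  and continuous_on_V: "continuous_on {-tau..} V"
  using solution unfolding is_solution_def by auto

lemma has_derivative_T: "t \<ge> 0 \<Longrightarrow> (T has_real_derivative fT t) (at t within {0..})"
  and has_derivative_I: "t \<ge> 0 \<Longrightarrow> (I has_real_derivative fI t) (at t within {0..})"
  and has_derivative_V: "t \<ge> 0 \<Longrightarrow> (V has_real_derivative fV t) (at t within {0..})"
  using solution unfolding is_solution_def fT_def fI_def fV_def by auto

lemma rates_ge_neg_multiple:
  assumes "T u > 0" "I u > 0" "V u > 0" "T (u - tau) > 0" "V (u - tau) > 0"
    and "T u + I u + V u \<le> M"
  defines "K \<equiv> d + mu + c + a * M / Tm + b * M"
  shows "fT u \<ge> - K * T u" "fI u \<ge> - K * I u" "fV u \<ge> - K * V u"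
proof -
  have M: "M \<ge> 0" "T u + I u \<le> M" "V u \<le> M" using assms by linarith+
  have logistic: "a * X * (1 - (T u + I u) / Tm) + a * M / Tm * X \<ge> 0" if "X \<ge> 0" for X
  proof -
    have "a * X * ((T u + I u) / Tm) \<le> a * X * (M / Tm)"
      using M(2) that params by (intro mult_left_mono divide_right_mono) auto
    moreover have "X * a \<ge> 0" using that params by simp
    ultimately show ?thesis by (simp add: algebra_simps)
  qed
  have "incid b al (T u) (V u) \<le> b * T u * V u"
    using assms params by (intro incid_le_mass_action) auto
  also have "\<dots> \<le> b * M * T u" using M assms params by (simp add: mult.commute mult_left_mono)
  finally have "b * M * T u - incid b al (T u) (V u) \<ge> 0" by simp
  moreover have "fT u + K * T u = s + (mu + c) * T u
      + (a * T u * (1 - (T u + I u) / Tm) + a * M / Tm * T u) + (b * M * T u - incid b al (T u) (V u))"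
    unfolding fT_def K_def by (simp add: algebra_simps)
  moreover have "(mu + c) * T u \<ge> 0" using assms params by simp
  ultimately show "fT u \<ge> - K * T u" using logistic[of "T u"] assms(1) params(1) by fastforce
  have "fI u + K * I u = incid b al (T (u - tau)) (V (u - tau)) + (d + c + b * M) * I u
      + (a * I u * (1 - (T u + I u) / Tm) + a * M / Tm * I u)"
    unfolding fI_def K_def by (simp add: algebra_simps)
  moreover have "incid b al (T (u - tau)) (V (u - tau)) \<ge> 0"
    using incid_pos[of b al] assms params by (simp add: less_imp_le)
  moreover have "(d + c + b * M) * I u \<ge> 0" using assms params M by simp
  ultimately show "fI u \<ge> - K * I u" using logistic[of "I u"] assms(2) by fastforce
  have "fV u + K * V u = p * I u + (d + mu + a * M / Tm + b * M) * V u"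
    unfolding fV_def K_def by (simp add: algebra_simps)
  moreover have "(d + mu + a * M / Tm + b * M) * V u \<ge> 0" using assms params M by simp
  moreover have "p * I u \<ge> 0" using assms params by simp
  ultimately show "fV u \<ge> - K * V u" by linarith
qed

lemma solution_pos:
  assumes "t \<ge> -tau"
  shows "T t > 0 \<and> I t > 0 \<and> V t > 0"
proof (rule ccontr)
  assume not_pos: "\<not> (T t > 0 \<and> I t > 0 \<and> V t > 0)"
  have history: "u \<in> {-tau..0} \<Longrightarrow> T u > 0 \<and> I u > 0 \<and> V u > 0" for u
    using pos_history unfolding pos_init_def by auto
  have cont: "continuous_on {0..} X" if "continuous_on {-tau..} X" for X :: "real \<Rightarrow> real"
    using continuous_on_subset[OF that] tau_nonneg by auto
  \<comment> \<open>\<open>t1\<close> is the first time a component vanishes; before \<open>t1\<close> each component obeys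
    \<open>X' \<ge> - K X\<close>, so it is still positive at \<open>t1\<close>.\<close>
  define Z where "Z = {0..} \<inter> (\<lambda>u. min (T u) (min (I u) (V u))) -` {..0}"
  define t1 where "t1 = Inf Z"
  have "t \<in> Z" using assms not_pos history unfolding Z_def by (cases "t \<le> 0") auto
  moreover have "closed Z" unfolding Z_def
    by (intro continuous_closed_preimage continuous_intros cont continuous_on_T continuous_on_I
        continuous_on_V)
  moreover have bdd: "bdd_below Z" unfolding Z_def by (auto intro: bdd_belowI[of _ 0])
  ultimately have "t1 \<in> Z" unfolding t1_def using closed_contains_Inf by blast
  then have "t1 \<ge> 0" and t1_not_pos: "\<not> (T t1 > 0 \<and> I t1 > 0 \<and> V t1 > 0)"
    unfolding Z_def by auto
  have before: "T u > 0 \<and> I u > 0 \<and> V u > 0" if "u \<ge> -tau" "u < t1" for u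
  proof (cases "u \<le> 0")
    case False
    then have "u \<notin> Z" using that cInf_lower[OF _ bdd, of u] unfolding t1_def by force
    then show ?thesis using False unfolding Z_def by auto
  qed (use history that in auto)
  have "continuous_on {0..t1} (\<lambda>u. T u + I u + V u)"
    using continuous_on_subset[OF cont] continuous_on_T continuous_on_I continuous_on_V
    by (intro continuous_intros) auto
  then obtain M where M: "\<And>u. u \<in> {0..t1} \<Longrightarrow> T u + I u + V u \<le> M"
    using continuous_attains_sup[of "{0..t1}"] \<open>t1 \<ge> 0\<close> by fastforce
  define K where "K = d + mu + c + a * M / Tm + b * M"
  have rates: "fT u \<ge> - K * T u" "fI u \<ge> - K * I u" "fV u \<ge> - K * V u"
    and derivs: "(T has_real_derivative fT u) (at u)" "(I has_real_derivative fI u) (at u)"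
      "(V has_real_derivative fV u) (at u)" if "0 < u" "u < t1" for u
  proof -
    show "fT u \<ge> - K * T u" "fI u \<ge> - K * I u" "fV u \<ge> - K * V u"
      unfolding K_def using before[of u] before[of "u - tau"] M[of u] that tau_nonneg
      by (intro rates_ge_neg_multiple; simp)+
    show "(T has_real_derivative fT u) (at u)" "(I has_real_derivative fI u) (at u)"
      "(V has_real_derivative fV u) (at u)"
      using has_derivative_T[of u] has_derivative_I[of u] has_derivative_V[of u]
        at_within_atLeast[of 0 u] that by auto
  qed
  have "T 0 > 0" "I 0 > 0" "V 0 > 0" using history[of 0] tau_nonneg by auto
  then have "T t1 > 0" "I t1 > 0" "V t1 > 0"
    using DERIV_ge_neg_multiple_imp_pos[OF \<open>t1 \<ge> 0\<close> cont[OF continuous_on_T, THEN continuous_on_subset]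
        _ derivs(1) rates(1)]
      DERIV_ge_neg_multiple_imp_pos[OF \<open>t1 \<ge> 0\<close> cont[OF continuous_on_I, THEN continuous_on_subset]
        _ derivs(2) rates(2)]
      DERIV_ge_neg_multiple_imp_pos[OF \<open>t1 \<ge> 0\<close> cont[OF continuous_on_V, THEN continuous_on_subset]
        _ derivs(3) rates(3)]
    by auto
  then show False using t1_not_pos by simp
qed

end

section \<open>The Lyapunov functional\<close>

locale tiv_equilibrium = tiv_model +
  fixes Ts Is Vs :: real
  assumes equilibrium: "pos_equilibrium s d a Tm b al mu p c (Ts, Is, Vs)"
begin

lemma equilibrium_pos: "Ts > 0" "Is > 0" "Vs > 0"
  and equilibrium_eq_T: "s - d * Ts + a * Ts * (1 - (Ts + Is) / Tm) - incid b al Ts Vs = 0"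
  and equilibrium_eq_I: "incid b al Ts Vs + a * Is * (1 - (Ts + Is) / Tm) - mu * Is = 0"
  and equilibrium_eq_V: "p * Is - c * Vs = 0"
  using equilibrium unfolding pos_equilibrium_def by auto

definition "fs = incid b al Ts Vs"

lemma fs_pos: "fs > 0" unfolding fs_def using equilibrium_pos params by (simp add: incid_pos)

definition "delta_max = min (min (Ts / 2) (Is / 2)) (min (Vs / 2) (fs / (2 * (b * (1/al + Ts)))))"

definition "history_gain = 2 / Ts + 2 / Is + fs / (p * Is) * (2 / Vs) + 2 * tau * (b * (1/al + Ts))^2 / fs"

definition "stability_level e = min (Ts * volterra_radius e Ts)
   (min (Is * volterra_radius e Is) (fs / (p * Is) * Vs * volterra_radius e Vs))"

lemma lyapunov_T_term:
  assumes "T > 0"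
  shows "(1 - Ts / T) * (s - d * T + a * T * (1 - (T + I) / Tm) - incid b al T V)
    = - s / (Ts + Is) * (T - Ts)^2 / T - a * (T - Ts) * ((T + I) - (Ts + Is)) / Tm
      + fs - incid b al T V - fs * (Ts / T) + incid b al T V * (Ts / T)"
proof -
  have s_eq: "s = d * Ts - a * Ts * (1 - (Ts + Is) / Tm) + fs" using equilibrium_eq_T unfolding fs_def by simp
  have "(1 - Ts / T) * (s - d * T + a * T * (1 - (T + I) / Tm) - incid b al T V)
    = - (d - a * (1 - (Ts + Is) / Tm)) * (T - Ts)^2 / T - a * (T - Ts) * ((T + I) - (Ts + Is)) / Tm
      + fs - incid b al T V - fs * (Ts / T) + incid b al T V * (Ts / T)"
    unfolding s_eq using assms params by (simp add: field_simps power2_eq_square)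
  moreover have "d - a * (1 - (Ts + Is) / Tm) = s / (Ts + Is)"
    using pos_equilibrium_reduced(1)[OF equilibrium] equilibrium_pos params by (simp add: field_simps)
  ultimately show ?thesis by simp
qed

lemma lyapunov_I_term:
  assumes "I > 0"
  shows "(1 - Is / I) * (incid b al Td Vd + a * I * (1 - (T + I) / Tm) - mu * I)
    = - a * (I - Is) * ((T + I) - (Ts + Is)) / Tm
      + incid b al Td Vd - incid b al Td Vd * (Is / I) - fs * (I / Is) + fs"
proof -
  have mu_eq: "mu = fs / Is + a * (1 - (Ts + Is) / Tm)"
    using equilibrium_eq_I equilibrium_pos unfolding fs_def by (simp add: field_simps)
  show ?thesis unfolding mu_eq using assms equilibrium_pos params by (simp add: field_simps)
qed

lemma lyapunov_V_term:
  assumes "V > 0"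
  shows "fs / (p * Is) * ((1 - Vs / V) * (p * I - c * V))
    = fs * (I / Is) - fs * (V / Vs) - fs * (I * Vs / (Is * V)) + fs"
proof -
  have "c = p * Is / Vs" using equilibrium_eq_V equilibrium_pos by (simp add: field_simps)
  then show ?thesis using assms equilibrium_pos params by (simp add: field_simps)
qed

lemma incid_mult_ratio:
  assumes "T > 0" "V > 0"
  shows "incid b al T V * (Ts / T) = fs * ((V / Vs) * ((1 + al * Vs) / (1 + al * V)))"
proof -
  define u where "u = 1 + al * V"
  define w where "w = 1 + al * Vs"
  have "u > 0" "w > 0" using assms params equilibrium_pos unfolding u_def w_def by (simp_all add: add_pos_pos)
  moreover have "incid b al T V = b * T * V / u" "fs = b * Ts * Vs / w"
    unfolding fs_def incid_def u_def w_def by simp_all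
  ultimately show ?thesis unfolding u_def[symmetric] w_def[symmetric]
    using assms equilibrium_pos by (simp add: field_simps)
qed

lemma incid_log_ratio_le:
  assumes "T > 0" "I > 0" "V > 0" "Td > 0" "Vd > 0"
  defines "\<phi> \<equiv> incid b al T V" and "\<phi>d \<equiv> incid b al Td Vd"
  shows "fs * ln (\<phi>d / fs) - fs * ln (\<phi> / fs)
    \<le> \<phi>d * (Is / I) + fs * (I * Vs / (Is * V)) + fs * (Ts / T) + fs * ((1 + al * V) / (1 + al * Vs)) - 4 * fs"
proof -
  have pos: "\<phi> > 0" "\<phi>d > 0" "1 + al * V > 0" "1 + al * Vs > 0"
    using assms params equilibrium_pos unfolding \<phi>_def \<phi>d_def by (simp_all add: incid_pos add_pos_pos)
  \<comment> \<open>The four ratios multiply to \<open>\<phi>d / \<phi>\<close>, so \<open>ln x \<le> x - 1\<close> absorbs all cross terms.\<close>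
  define A where "A = \<phi>d * Is / (fs * I)"
  define B where "B = I * Vs / (Is * V)"
  define R where "R = Ts / T"
  define Q where "Q = (1 + al * V) / (1 + al * Vs)"
  have ABRQ: "A > 0" "B > 0" "R > 0" "Q > 0"
    using assms pos fs_pos equilibrium_pos unfolding A_def B_def Q_def R_def by simp_all
  have "A * B * R * Q = \<phi>d / (\<phi> * R) * R"
    unfolding R_def \<phi>_def incid_mult_ratio[OF assms(1,3)] \<phi>d_def[symmetric]
    using assms pos fs_pos equilibrium_pos unfolding A_def B_def Q_def by (simp add: field_simps)
  then have "\<phi>d / \<phi> = A * B * R * Q" using ABRQ pos by simp
  have "ln (\<phi>d / fs) - ln (\<phi> / fs) = ln (\<phi>d / \<phi>)" using pos fs_pos by (simp add: ln_div)
  also have "\<dots> = ln A + ln B + ln R + ln Q" unfolding \<open>\<phi>d / \<phi> = _\<close> using ABRQ by (simp add: ln_mult)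
  finally have "ln (\<phi>d / fs) - ln (\<phi> / fs) \<le> A + B + R + Q - 4"
    using ln_le_minus_one[of A] ln_le_minus_one[of B] ln_le_minus_one[of R] ln_le_minus_one[of Q] ABRQ
    by linarith
  then have "fs * (ln (\<phi>d / fs) - ln (\<phi> / fs)) \<le> fs * (A + B + R + Q - 4)"
    using fs_pos by (simp add: mult_left_mono)
  moreover have "fs * A = \<phi>d * (Is / I)" using fs_pos unfolding A_def by simp
  ultimately show ?thesis unfolding B_def R_def Q_def by (simp add: algebra_simps)
qed

lemma lyapunov_derivative_bound:
  assumes "T > 0" "I > 0" "V > 0" "Td > 0" "Vd > 0"
  defines "\<phi> \<equiv> incid b al T V" and "\<phi>d \<equiv> incid b al Td Vd"
  shows "(1 - Ts / T) * (s - d * T + a * T * (1 - (T + I) / Tm) - \<phi>)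
       + (1 - Is / I) * (\<phi>d + a * I * (1 - (T + I) / Tm) - mu * I)
       + fs / (p * Is) * ((1 - Vs / V) * (p * I - c * V))
       + fs * (volterra (\<phi> / fs) - volterra (\<phi>d / fs))
     \<le> - (s / (Ts + Is) * (T - Ts)^2 / T + a * ((T + I) - (Ts + Is))^2 / Tm
          + fs * al * (V - Vs)^2 / (Vs * (1 + al * Vs) * (1 + al * V)))"
proof -
  define u where "u = 1 + al * V"
  define w where "w = 1 + al * Vs"
  have "u > 0" "w > 0" using assms params equilibrium_pos unfolding u_def w_def by (simp_all add: add_pos_pos)
  then have "(V / Vs) * (w / u) - V / Vs + u / w - 1 = - al * (V - Vs)^2 / (Vs * w * u)"
    using saturation_identity[OF u_def w_def] assms equilibrium_pos by simp
  then have "fs * ((V / Vs) * (w / u) - V / Vs + u / w - 1) = fs * (- al * (V - Vs)^2 / (Vs * w * u))"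
    by (rule arg_cong)
  then have "fs * ((V / Vs) * (w / u)) - fs * (V / Vs) + fs * (u / w) - fs
      = fs * (- al * (V - Vs)^2 / (Vs * w * u))"
    by (simp only: right_diff_distrib distrib_left mult_1_right)
  moreover have "fs * (- al * (V - Vs)^2 / (Vs * w * u)) = - (fs * al * (V - Vs)^2 / (Vs * w * u))"
    by simp
  moreover have "a * (T - Ts) * ((T + I) - (Ts + Is)) / Tm + a * (I - Is) * ((T + I) - (Ts + Is)) / Tm
      = a * ((T + I) - (Ts + Is))^2 / Tm"
    unfolding add_divide_distrib[symmetric] by (simp add: algebra_simps power2_eq_square)
  moreover have "fs * (volterra (\<phi> / fs) - volterra (\<phi>d / fs))
      = \<phi> - \<phi>d + fs * ln (\<phi>d / fs) - fs * ln (\<phi> / fs)"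
    unfolding volterra_def using fs_pos by (simp add: algebra_simps)
  moreover note incid_log_ratio_le[OF assms(1-5), folded \<phi>_def \<phi>d_def u_def w_def]
    incid_mult_ratio[OF assms(1,3), folded \<phi>_def u_def w_def]
    lyapunov_T_term[OF assms(1), of I V, folded \<phi>_def]
    lyapunov_I_term[OF assms(2), of Td Vd T, folded \<phi>d_def] lyapunov_V_term[OF assms(3), of I]
  ultimately show ?thesis unfolding u_def[symmetric] w_def[symmetric] by linarith
qed

end

locale tiv_lyapunov = tiv_solution + tiv_equilibrium
begin

definition "G u = volterra (incid b al (T u) (V u) / fs)"
definition "H x = integral {-tau..x} G"
definition "L t = Ts * volterra (T t / Ts) + Is * volterra (I t / Is)
   + fs / (p * Is) * (Vs * volterra (V t / Vs)) + fs * (H t - H (t - tau))"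
definition "DL t = (1 - Ts / T t) * fT t + (1 - Is / I t) * fI t
   + fs / (p * Is) * ((1 - Vs / V t) * fV t) + fs * (G t - G (t - tau))"
definition "W t = (s / (Ts + Is)) * (T t - Ts)^2 / T t + a * ((T t + I t) - (Ts + Is))^2 / Tm
   + fs * al * (V t - Vs)^2 / (Vs * (1 + al * Vs) * (1 + al * V t))"

lemma G_nonneg: "u \<ge> -tau \<Longrightarrow> G u \<ge> 0"
  unfolding G_def using solution_pos[of u] params fs_pos
  by (intro volterra_nonneg divide_pos_pos incid_pos) auto

lemma continuous_on_G: "continuous_on {-tau..} G"
proof -
  have "0 < incid b al (T u) (V u) / fs" "1 + al * V u > 0" if "u \<in> {-tau..}" for u
    using solution_pos[of u] that params fs_pos by (simp_all add: incid_pos add_pos_pos)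
  then show ?thesis unfolding G_def volterra_def incid_def
    by (intro continuous_intros continuous_on_T continuous_on_V) (fastforce simp: incid_def)+
qed

lemma H_has_derivative:
  assumes "u \<ge> -tau"
  shows "(H has_real_derivative G u) (at u within {-tau..})"
proof -
  have c: "continuous_on {-tau..u+1} G" by (rule continuous_on_subset[OF continuous_on_G]) auto
  have "(H has_real_derivative G u) (at u within {-tau..u+1})"
    unfolding H_def using integral_has_real_derivative[OF c, of u] assms by simp
  moreover have "at u within {-tau..u+1} = at u within {-tau..}"
    by (rule at_within_nhd[of _ "{..<u+1}"]) auto
  ultimately show ?thesis by simp
qed

lemma H_delayed_has_derivative: assumes "t \<ge> 0"
  shows "((\<lambda>t. H (t - tau)) has_real_derivative G (t - tau)) (at t within {0..})"
proof -
  have img: "(\<lambda>t. t - tau) ` {0..} = {-tau..}"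
  proof (auto)
    fix x assume "-tau \<le> x" then show "x \<in> (\<lambda>t. t - tau) ` {0..}"
      by (intro image_eqI[of _ _ "x+tau"]) auto
  qed
  have "(H has_real_derivative G (t - tau)) (at ((\<lambda>t. t - tau) t) within (\<lambda>t. t - tau) ` {0..})"
    unfolding img using H_has_derivative[of "t - tau"] assms by simp
  moreover have "((\<lambda>t. t - tau) has_real_derivative 1) (at t within {0..})"
    by (auto intro!: derivative_eq_intros)
  ultimately have "(H \<circ> (\<lambda>t. t - tau) has_real_derivative G (t - tau) * 1) (at t within {0..})"
    by (rule DERIV_image_chain)
  then show ?thesis by (simp add: o_def)
qed

lemma L_has_derivative:
  assumes "t \<ge> 0"
  shows "(L has_real_derivative DL t) (at t within {0..})"
proof -
  have pos: "T t > 0" "I t > 0" "V t > 0" using solution_pos[of t] assms tau_nonneg by auto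
  have "(H has_real_derivative G t) (at t within {0..})"
    using DERIV_subset[OF H_has_derivative[of t]] assms tau_nonneg by auto
  then show ?thesis unfolding L_def[abs_def] DL_def
    by (intro DERIV_add DERIV_cmult DERIV_diff volterra_deriv has_derivative_T has_derivative_I
        has_derivative_V H_delayed_has_derivative assms pos equilibrium_pos)
qed

lemma DL_le_neg_W: assumes "t \<ge> 0" shows "DL t \<le> - W t"
proof -
  have p: "T t > 0" "I t > 0" "V t > 0" using solution_pos[of t] assms tau_nonneg by auto
  have pd: "T (t - tau) > 0" "V (t - tau) > 0" using solution_pos[of "t - tau"] assms by auto
  show ?thesis
    using lyapunov_derivative_bound[OF p pd] unfolding DL_def W_def fT_def fI_def fV_def G_def by simp
qed

lemma W_nonneg: assumes "t \<ge> 0" shows "W t \<ge> 0"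
proof -
  have p: "T t > 0" "I t > 0" "V t > 0" using solution_pos[of t] assms tau_nonneg by auto
  have "1 + al * V t > 0" "1 + al * Vs > 0" using p equilibrium_pos params by (simp_all add: add_pos_pos)
  then show ?thesis unfolding W_def using p equilibrium_pos params fs_pos
    by (intro add_nonneg_nonneg divide_nonneg_pos mult_nonneg_nonneg) auto
qed

lemma continuous_on_L: "continuous_on {0..} L"
  by (rule DERIV_continuous_on[OF L_has_derivative]) auto

lemma L_antimono:
  assumes "0 \<le> x" "x \<le> y"
  shows "L y \<le> L x"
proof -
  have "L y \<le> L x - 0 * (y - x)"
  proof (rule DERIV_le_neg_imp_decrease[OF assms(2)])
    show "continuous_on {x..y} L" by (rule continuous_on_subset[OF continuous_on_L]) (use assms in auto)
    show "(L has_real_derivative DL t) (at t)" if "x < t" for t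
      using L_has_derivative[of t] at_within_atLeast[of 0 t] that assms by simp
    show "DL t \<le> - 0" if "x < t" for t using DL_le_neg_W[of t] W_nonneg[of t] that assms by simp
  qed
  then show ?thesis by simp
qed

lemma H_delay_diff: assumes "t \<ge> 0" shows "H t - H (t - tau) = integral {t - tau..t} G"
proof -
  have c: "continuous_on {-tau..t} G" by (rule continuous_on_subset[OF continuous_on_G]) auto
  have "integral {-tau..t - tau} G + integral {t - tau..t} G = integral {-tau..t} G"
    by (rule Henstock_Kurzweil_Integration.integral_combine)
      (use assms tau_nonneg integrable_continuous_interval[OF c] in auto)
  then show ?thesis unfolding H_def by simp
qed

lemma H_delay_diff_nonneg: assumes "t \<ge> 0" shows "H t - H (t - tau) \<ge> 0"
proof -
  have c: "continuous_on {t - tau..t} G" by (rule continuous_on_subset[OF continuous_on_G]) (use assms in auto)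
  show ?thesis unfolding H_delay_diff[OF assms]
    by (rule integral_nonneg[OF integrable_continuous_interval[OF c]]) (use G_nonneg assms in auto)
qed

lemma components_le_L:
  assumes "t \<ge> 0"
  shows "Ts * volterra (T t / Ts) \<le> L t" and "Is * volterra (I t / Is) \<le> L t"
    and "fs / (p * Is) * (Vs * volterra (V t / Vs)) \<le> L t"
proof -
  have "T t > 0" "I t > 0" "V t > 0" using solution_pos[of t] assms tau_nonneg by auto
  then have "Ts * volterra (T t / Ts) \<ge> 0" "Is * volterra (I t / Is) \<ge> 0"
    "fs / (p * Is) * (Vs * volterra (V t / Vs)) \<ge> 0" "fs * (H t - H (t - tau)) \<ge> 0"
    using equilibrium_pos params fs_pos H_delay_diff_nonneg[OF assms]
    by (auto intro!: mult_nonneg_nonneg volterra_nonneg divide_nonneg_pos)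
  then show "Ts * volterra (T t / Ts) \<le> L t" "Is * volterra (I t / Is) \<le> L t"
    "fs / (p * Is) * (Vs * volterra (V t / Vs)) \<le> L t"
    unfolding L_def by linarith+
qed

lemma L_nonneg:
  assumes "t \<ge> 0"
  shows "L t \<ge> 0"
proof -
  have "Ts * volterra (T t / Ts) \<ge> 0"
    using volterra_nonneg[of "T t / Ts"] solution_pos[of t] assms tau_nonneg equilibrium_pos by simp
  then show ?thesis using components_le_L(1)[OF assms] by linarith
qed

lemma solution_bounded: "\<exists>B. \<forall>t\<ge>0. T t \<le> B \<and> I t \<le> B \<and> V t \<le> B"
proof -
  have bound: "X t \<le> Xs * (1 + sqrt (L 0 / k))^2"
    if "t \<ge> 0" "X t > 0" "Xs > 0" "k > 0" "k * volterra (X t / Xs) \<le> L t" for X :: "real \<Rightarrow> real" and Xs k t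
  proof -
    have "k * volterra (X t / Xs) \<le> L 0" using that L_antimono[of 0 t] by simp
    then have "X t / Xs \<le> (1 + sqrt (L 0 / k))^2"
      using volterra_le_imp_le[of "X t / Xs" k] that by simp
    then show ?thesis using that by (simp add: pos_divide_le_eq mult.commute)
  qed
  define kV where "kV = fs / (p * Is) * Vs"
  have "kV > 0" unfolding kV_def using fs_pos params equilibrium_pos by simp
  define B where "B = max (Ts * (1 + sqrt (L 0 / Ts))^2)
    (max (Is * (1 + sqrt (L 0 / Is))^2) (Vs * (1 + sqrt (L 0 / kV))^2))"
  have "T t \<le> B \<and> I t \<le> B \<and> V t \<le> B" if "t \<ge> 0" for t
  proof -
    have "kV * volterra (V t / Vs) \<le> L t" using components_le_L(3)[OF that] unfolding kV_def by (simp add: mult.assoc)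
    then show ?thesis
      using bound[of t T Ts Ts] bound[of t I Is Is] bound[of t V Vs kV] \<open>kV > 0\<close> components_le_L[OF that]
        solution_pos[of t] that tau_nonneg equilibrium_pos
      unfolding B_def le_max_iff_disj by simp
  qed
  then show ?thesis by blast
qed

lemma rates_bounded:
  assumes B: "\<And>t. t \<ge> 0 \<Longrightarrow> T t \<le> B \<and> I t \<le> B \<and> V t \<le> B"
  shows "\<exists>M>0. \<forall>t\<ge>tau. \<bar>fT t\<bar> \<le> M \<and> \<bar>fI t\<bar> \<le> M \<and> \<bar>fV t\<bar> \<le> M"
proof -
  define M where "M = s + (d + mu + c + p + a) * B + 2 * a * B^2 / Tm + b * B^2 + 1"
  have "\<bar>fT t\<bar> \<le> M \<and> \<bar>fI t\<bar> \<le> M \<and> \<bar>fV t\<bar> \<le> M" if "t \<ge> tau" for t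
  proof -
    have t: "t \<ge> 0" "t - tau \<ge> 0" using that tau_nonneg by linarith+
    have pos: "0 < T t" "0 < I t" "0 < V t" "0 < T (t - tau)" "0 < V (t - tau)"
      using solution_pos[of t] solution_pos[of "t - tau"] t tau_nonneg by auto
    have le: "T t \<le> B" "I t \<le> B" "V t \<le> B" "T (t - tau) \<le> B" "V (t - tau) \<le> B"
      using B[of t] B[of "t - tau"] t by auto
    have incid: "0 \<le> incid b al x v" "incid b al x v \<le> b * B^2"
      if "0 < x" "x \<le> B" "0 < v" "v \<le> B" for x v
      using incid_pos[of b al x v] incid_le_square_bound[of b al x B v] that params by simp_all
    have crowding: "0 \<le> a * x * ((T t + I t) / Tm)" "a * x * ((T t + I t) / Tm) \<le> 2 * a * B^2 / Tm"
      if "0 < x" "x \<le> B" for x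
    proof -
      show "0 \<le> a * x * ((T t + I t) / Tm)" using that pos params by simp
      have "a * x * ((T t + I t) / Tm) \<le> a * B * (2 * B / Tm)"
        using that pos le params by (intro mult_mono divide_right_mono) auto
      moreover have "a * B * (2 * B / Tm) = 2 * a * B^2 / Tm" by (simp add: power2_eq_square)
      ultimately show "a * x * ((T t + I t) / Tm) \<le> 2 * a * B^2 / Tm" by linarith
    qed
    have lin: "0 \<le> d * T t" "d * T t \<le> d * B" "0 \<le> a * T t" "a * T t \<le> a * B"
      "0 \<le> mu * I t" "mu * I t \<le> mu * B" "0 \<le> a * I t" "a * I t \<le> a * B"
      "0 \<le> p * I t" "p * I t \<le> p * B" "0 \<le> c * V t" "c * V t \<le> c * B"
      using pos le params by simp_all
    have "0 \<le> d * B" "0 \<le> mu * B" "0 \<le> c * B" "0 \<le> p * B" "0 \<le> a * B" "0 \<le> 2 * a * B^2 / Tm"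
      "0 \<le> b * B^2"
      using pos le params by simp_all
    then have "M \<ge> s + d * B + a * B + 2 * a * B^2 / Tm + b * B^2 + 1"
      "M \<ge> b * B^2 + a * B + 2 * a * B^2 / Tm + mu * B + 1" "M \<ge> p * B + c * B + 1"
      unfolding M_def using params(1) by (simp_all add: algebra_simps)
    moreover have "fT t = s - d * T t + a * T t - a * T t * ((T t + I t) / Tm) - incid b al (T t) (V t)"
      "fI t = incid b al (T (t - tau)) (V (t - tau)) + a * I t - a * I t * ((T t + I t) / Tm) - mu * I t"
      unfolding fT_def fI_def by (simp_all add: algebra_simps)
    ultimately show ?thesis
      using incid[of "T t" "V t"] incid[of "T (t - tau)" "V (t - tau)"] crowding[of "T t"]
        crowding[of "I t"] lin pos le params(1) unfolding fV_def abs_le_iff by auto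
  qed
  moreover have "M > 0" unfolding M_def
    using params B[of 0] solution_pos[of 0] tau_nonneg by (intro add_nonneg_pos add_nonneg_nonneg) auto
  ultimately show ?thesis by blast
qed

lemma W_lower:
  assumes "t \<ge> 0" "T t \<le> B" "V t \<le> B"
  shows "W t \<ge> (s / ((Ts + Is) * B)) * (T t - Ts)^2"
    and "W t \<ge> (a / Tm) * ((T t + I t) - (Ts + Is))^2"
    and "W t \<ge> (fs * al / (Vs * (1 + al * Vs) * (1 + al * B))) * (V t - Vs)^2"
proof -
  have p: "T t > 0" "I t > 0" "V t > 0" using solution_pos[of t] assms tau_nonneg by auto
  have q: "1 + al * V t > 0" "1 + al * Vs > 0" "1 + al * B > 0" "Ts + Is > 0"
    using p assms equilibrium_pos params by (simp_all add: add_pos_pos add_pos_nonneg)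
  define w1 where "w1 = (s / (Ts + Is)) * (T t - Ts)^2 / T t"
  define w2 where "w2 = a * ((T t + I t) - (Ts + Is))^2 / Tm"
  define w3 where "w3 = fs * al * (V t - Vs)^2 / (Vs * (1 + al * Vs) * (1 + al * V t))"
  have W: "W t = w1 + w2 + w3" unfolding W_def w1_def w2_def w3_def by simp
  have n: "w1 \<ge> 0" "w2 \<ge> 0" "w3 \<ge> 0" unfolding w1_def w2_def w3_def
    using p q equilibrium_pos params fs_pos by (auto intro!: divide_nonneg_pos mult_nonneg_nonneg)
  have "(s / ((Ts + Is) * B)) * (T t - Ts)^2 = (s / (Ts + Is)) * (T t - Ts)^2 / B" by simp
  also have "\<dots> \<le> w1" unfolding w1_def using assms p params q by (intro divide_left_mono) auto
  finally show "W t \<ge> (s / ((Ts + Is) * B)) * (T t - Ts)^2" using W n by linarith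
  show "W t \<ge> (a / Tm) * ((T t + I t) - (Ts + Is))^2" using W n unfolding w2_def by simp
  have "(fs * al / (Vs * (1 + al * Vs) * (1 + al * B))) * (V t - Vs)^2
      = fs * al * (V t - Vs)^2 / (Vs * (1 + al * Vs) * (1 + al * B))" by simp
  also have "\<dots> \<le> w3" unfolding w3_def
    using assms p params equilibrium_pos q fs_pos by (intro divide_left_mono mult_left_mono mult_pos_pos) auto
  finally show "W t \<ge> (fs * al / (Vs * (1 + al * Vs) * (1 + al * B))) * (V t - Vs)^2" using W n by linarith
qed

lemma solution_converges: "(T \<longlongrightarrow> Ts) at_top \<and> (I \<longlongrightarrow> Is) at_top \<and> (V \<longlongrightarrow> Vs) at_top"
proof -
  obtain B where B: "\<And>t. t \<ge> 0 \<Longrightarrow> T t \<le> B \<and> I t \<le> B \<and> V t \<le> B"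
    using solution_bounded by blast
  then obtain M where "M > 0" and M: "\<And>t. t \<ge> tau \<Longrightarrow> \<bar>fT t\<bar> \<le> M \<and> \<bar>fI t\<bar> \<le> M \<and> \<bar>fV t\<bar> \<le> M"
    using rates_bounded by blast
  have "B > 0" using B[of 0] solution_pos[of 0] tau_nonneg by fastforce
  have L': "(L has_real_derivative DL t) (at t)" if "t > 0" for t
    using L_has_derivative[of t] at_within_atLeast[OF that] that by simp
  have tendsto: "(F \<longlongrightarrow> x) at_top"
    if "\<kappa> > 0" and W: "\<And>t. t > 0 \<Longrightarrow> W t \<ge> \<kappa> * (F t - x)^2"
      and F': "\<And>t. t \<ge> tau \<Longrightarrow> (F has_real_derivative F' t) (at t within {0..})"
      and bnd: "\<And>t. t \<ge> tau \<Longrightarrow> \<bar>F' t\<bar> \<le> 2 * M"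
    for F F' :: "real \<Rightarrow> real" and \<kappa> x
  proof (rule lyapunov_dissipation_imp_tendsto[OF L' continuous_on_L _ \<open>\<kappa> > 0\<close> L_nonneg])
    show "DL t \<le> - \<kappa> * (F t - x)^2" if "t > 0" for t
      using DL_le_neg_W[of t] W[OF that] that by simp
    show "\<bar>F v - F u\<bar> \<le> 2 * M * (v - u)" if "tau \<le> u" "u \<le> v" for u v
    proof (rule DERIV_bounded_imp_lipschitz[of tau F F' "2 * M", OF _ bnd that])
      show "(F has_real_derivative F' t) (at t within {tau..})" if "t \<ge> tau" for t
        by (rule DERIV_subset[OF F'[OF that]]) (use tau_nonneg in auto)
    qed
  qed (use \<open>M > 0\<close> in auto)
  have bnd: "\<bar>fT t\<bar> \<le> 2 * M" "\<bar>fT t + fI t\<bar> \<le> 2 * M" "\<bar>fV t\<bar> \<le> 2 * M" if "t \<ge> tau" for t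
    using M[OF that] \<open>M > 0\<close> abs_triangle_ineq[of "fT t" "fI t"] by linarith+
  have "(T \<longlongrightarrow> Ts) at_top"
    by (rule tendsto[of "s / ((Ts + Is) * B)" T Ts fT])
      (use W_lower(1) B has_derivative_T bnd \<open>B > 0\<close> equilibrium_pos params tau_nonneg in auto)
  moreover have "((\<lambda>t. T t + I t) \<longlongrightarrow> Ts + Is) at_top"
  proof (rule tendsto[of "a / Tm" _ _ "\<lambda>t. fT t + fI t"])
    show "W t \<ge> a / Tm * (T t + I t - (Ts + Is))^2" if "t > 0" for t
      using W_lower(2)[of t B] B[of t] that by simp
    show "((\<lambda>t. T t + I t) has_real_derivative fT t + fI t) (at t within {0..})" if "t \<ge> tau" for t
      using has_derivative_T has_derivative_I that tau_nonneg by (intro DERIV_add) auto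
  qed (use bnd params in auto)
  moreover have "(V \<longlongrightarrow> Vs) at_top"
    by (rule tendsto[of "fs * al / (Vs * (1 + al * Vs) * (1 + al * B))" V Vs fV])
      (use W_lower(3) B has_derivative_V bnd \<open>B > 0\<close> equilibrium_pos params fs_pos tau_nonneg
        in \<open>auto intro!: divide_pos_pos mult_pos_pos add_pos_pos\<close>)
  ultimately show ?thesis
    using tendsto_diff[of "\<lambda>t. T t + I t" "Ts + Is" at_top T Ts] by simp
qed

lemma L_history_bound:
  assumes "0 < \<delta>" "\<delta> \<le> delta_max"
    and close: "\<forall>\<theta>\<in>{-tau..0}. \<bar>T \<theta> - Ts\<bar> < \<delta> \<and> \<bar>I \<theta> - Is\<bar> < \<delta> \<and> \<bar>V \<theta> - Vs\<bar> < \<delta>"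
  shows "L 0 \<le> history_gain * \<delta>^2"
proof -
  have "2 * (b * (1/al + Ts)) > 0" using params equilibrium_pos by (simp add: add_pos_pos)
  then have small: "\<delta> \<le> Ts / 2" "\<delta> \<le> Is / 2" "\<delta> \<le> Vs / 2" "\<delta> * (2 * (b * (1/al + Ts))) \<le> fs"
    using assms(2) unfolding delta_max_def by (auto simp: pos_le_divide_eq)
  have pos: "T u > 0" "I u > 0" "V u > 0" if "u \<in> {-tau..0}" for u
    using solution_pos[of u] that by auto
  have "0 \<in> {-tau..0}" using tau_nonneg by simp
  note close0 = close[rule_format, OF this] and pos0 = pos[OF this]
  define D where "D = b * (1/al + Ts) * \<delta>"
  have "D \<le> fs / 2" using small(4) unfolding D_def by (simp add: algebra_simps)
  have "fs * G u \<le> 2 * D^2 / fs" if "u \<in> {-tau..0}" for u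
  proof -
    have "\<bar>incid b al (T u) (V u) - fs\<bar> \<le> D"
      unfolding fs_def D_def using close[rule_format, OF that] pos[OF that] params equilibrium_pos
      by (intro incid_lipschitz) auto
    then show ?thesis unfolding G_def
      using volterra_near_one[of "incid b al (T u) (V u)" fs D] \<open>D \<le> fs / 2\<close> pos[OF that] params fs_pos
      by (simp add: incid_pos)
  qed
  then have "integral {-tau..0} (\<lambda>u. fs * G u) \<le> integral {-tau..0} (\<lambda>_. 2 * D^2 / fs)"
    using continuous_on_subset[OF continuous_on_G] by (intro integral_le integrable_continuous_interval
        continuous_intros) auto
  then have "fs * (H 0 - H (0 - tau)) \<le> 2 * tau * (b * (1/al + Ts))^2 / fs * \<delta>^2"
    using H_delay_diff[of 0] tau_nonneg unfolding D_def by (simp add: power_mult_distrib mult_ac)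
  moreover have "Ts * volterra (T 0 / Ts) \<le> 2 * \<delta>^2 / Ts" "Is * volterra (I 0 / Is) \<le> 2 * \<delta>^2 / Is"
    "Vs * volterra (V 0 / Vs) \<le> 2 * \<delta>^2 / Vs"
    using volterra_near_one close0 pos0 equilibrium_pos small by auto
  moreover have "fs / (p * Is) * (Vs * volterra (V 0 / Vs)) \<le> fs / (p * Is) * (2 * \<delta>^2 / Vs)"
    using calculation(4) fs_pos params equilibrium_pos by (intro mult_left_mono) auto
  moreover have "history_gain * \<delta>^2 = 2 * \<delta>^2 / Ts + 2 * \<delta>^2 / Is + fs / (p * Is) * (2 * \<delta>^2 / Vs)
      + 2 * tau * (b * (1/al + Ts))^2 / fs * \<delta>^2"
    unfolding history_gain_def by (simp add: algebra_simps)
  ultimately show ?thesis unfolding L_def by linarith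
qed

lemma L_small_imp_close:
  assumes "e > 0" and "L 0 < stability_level e" and "t \<ge> 0"
  shows "\<bar>T t - Ts\<bar> < e \<and> \<bar>I t - Is\<bar> < e \<and> \<bar>V t - Vs\<bar> < e"
proof -
  have pos: "T t > 0" "I t > 0" "V t > 0" using solution_pos[of t] assms tau_nonneg by auto
  have k: "Ts > 0" "Is > 0" "fs / (p * Is) * Vs > 0" using fs_pos params equilibrium_pos by simp_all
  have Lt: "L t < stability_level e" using L_antimono[of 0 t] assms by simp
  have "Ts * volterra (T t / Ts) < Ts * volterra_radius e Ts"
    "Is * volterra (I t / Is) < Is * volterra_radius e Is"
    "fs / (p * Is) * Vs * volterra (V t / Vs) < fs / (p * Is) * Vs * volterra_radius e Vs"
    using components_le_L[OF assms(3)] Lt unfolding stability_level_def by (simp_all add: mult.assoc)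
  then have "volterra (T t / Ts) < volterra_radius e Ts" "volterra (I t / Is) < volterra_radius e Is"
    "volterra (V t / Vs) < volterra_radius e Vs"
    using k mult_less_cancel_left_pos by blast+
  then show ?thesis
    using volterra_lt_radius_imp_close[OF _ _ assms(1)] pos equilibrium_pos by simp
qed

end

context tiv_equilibrium
begin

lemma equilibrium_stable:
  assumes "e > 0"
  shows "\<exists>\<delta>>0. \<forall>T I V. is_solution s d a Tm b al mu p c tau T I V \<and> pos_init tau T I V \<and>
          (\<forall>\<theta>\<in>{-tau..0}. \<bar>T \<theta> - Ts\<bar> < \<delta> \<and> \<bar>I \<theta> - Is\<bar> < \<delta> \<and> \<bar>V \<theta> - Vs\<bar> < \<delta>)
          \<longrightarrow> (\<forall>t\<ge>0. \<bar>T t - Ts\<bar> < e \<and> \<bar>I t - Is\<bar> < e \<and> \<bar>V t - Vs\<bar> < e)"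
proof -
  have "b * (1/al + Ts) > 0" using params equilibrium_pos by (simp add: add_pos_pos)
  then have "delta_max > 0" unfolding delta_max_def using equilibrium_pos fs_pos by simp
  have "stability_level e > 0"
    unfolding stability_level_def using equilibrium_pos fs_pos params assms by (simp add: volterra_radius_pos)
  have "history_gain \<ge> 0"
    unfolding history_gain_def using equilibrium_pos fs_pos params tau_nonneg by simp
  define q where "q = stability_level e / (history_gain + 1)"
  have "q > 0" unfolding q_def using \<open>stability_level e > 0\<close> \<open>history_gain \<ge> 0\<close> by simp
  define \<delta> where "\<delta> = min delta_max (sqrt q)"
  have "\<delta> > 0" unfolding \<delta>_def using \<open>delta_max > 0\<close> \<open>q > 0\<close> by simp
  have "\<delta>^2 \<le> (sqrt q)^2" by (rule power_mono) (use \<open>\<delta> > 0\<close> in \<open>simp_all add: \<delta>_def\<close>)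
  then have "history_gain * \<delta>^2 \<le> history_gain * q"
    using \<open>q > 0\<close> \<open>history_gain \<ge> 0\<close> by (simp add: mult_left_mono)
  also have "\<dots> < stability_level e"
    unfolding q_def using \<open>stability_level e > 0\<close> \<open>history_gain \<ge> 0\<close> by (simp add: field_simps)
  finally have gain: "history_gain * \<delta>^2 < stability_level e" .
  have "\<forall>t\<ge>0. \<bar>T t - Ts\<bar> < e \<and> \<bar>I t - Is\<bar> < e \<and> \<bar>V t - Vs\<bar> < e"
    if "is_solution s d a Tm b al mu p c tau T I V" "pos_init tau T I V"
      and close: "\<forall>\<theta>\<in>{-tau..0}. \<bar>T \<theta> - Ts\<bar> < \<delta> \<and> \<bar>I \<theta> - Is\<bar> < \<delta> \<and> \<bar>V \<theta> - Vs\<bar> < \<delta>" for T I V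
  proof -
    interpret tiv_lyapunov s d a Tm b al mu p c tau T I V Ts Is Vs
      using that(1,2) by unfold_locales
    have "L 0 < stability_level e"
      using L_history_bound[OF \<open>\<delta> > 0\<close> _ close] gain unfolding \<delta>_def by simp
    then show ?thesis using L_small_imp_close[OF assms] by blast
  qed
  then show ?thesis using \<open>\<delta> > 0\<close> by blast
qed

lemma equilibrium_attractive:
  assumes "is_solution s d a Tm b al mu p c tau T I V" "pos_init tau T I V"
  shows "(T \<longlongrightarrow> Ts) at_top \<and> (I \<longlongrightarrow> Is) at_top \<and> (V \<longlongrightarrow> Vs) at_top"
proof -
  interpret tiv_lyapunov s d a Tm b al mu p c tau T I V Ts Is Vs
    using assms by unfold_locales
  show ?thesis by (rule solution_converges)
qed

theorem equilibrium_globally_asymp_stable: "globally_asymp_stable s d a Tm b al mu p c tau (Ts, Is, Vs)"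
  unfolding globally_asymp_stable_def prod.case
  using equilibrium_stable equilibrium_attractive by blast

end

theorem corollary1:
  fixes s d a Tm b al mu p c tau :: real
  assumes "s > 0" "d > 0" "a > 0" "Tm > 0" "b > 0" "al > 0" "mu > 0" "p > 0" "c > 0"
    and "tau \<ge> 0"
    and "d = mu"
    and "R0 s d a Tm b mu p c > 1"
  shows "(\<exists>!E. pos_equilibrium s d a Tm b al mu p c E) \<and>
         (\<forall>E. pos_equilibrium s d a Tm b al mu p c E \<longrightarrow>
              globally_asymp_stable s d a Tm b al mu p c tau E)"
proof -
  interpret tiv_model s d a Tm b al mu p c tau
    using assms(1-11) by unfold_locales
  have "\<exists>!E. pos_equilibrium s d a Tm b al mu p c E"
    using pos_equilibrium_exists[OF assms(12)] pos_equilibrium_unique by (metis prod_cases3)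
  moreover have "globally_asymp_stable s d a Tm b al mu p c tau (Ts, Is, Vs)"
    if "pos_equilibrium s d a Tm b al mu p c (Ts, Is, Vs)" for Ts Is Vs
  proof -
    interpret tiv_equilibrium s d a Tm b al mu p c tau Ts Is Vs
      using that by unfold_locales
    show ?thesis by (rule equilibrium_globally_asymp_stable)
  qed
  ultimately show ?thesis by auto
qed

end
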